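(* Assume the setting below and that $M_i(1)\ge M_i(0)$ for all $1\le i\le n$. Fix $\boldsymbol\delta\in\mathbb R^n$, $\alpha\in(0,1)$ and $\beta\in(0,\alpha)$. Let $\hat M$ be an integer-valued statistic with $\mathbb P\big(\sum_{i=1}^n M_i(0)\le\hat M\big)\ge1-\beta$. Let $n_{11}=\sum_iZ_iM_i$, $n_{01}=\sum_i(1-Z_i)M_i$ and $\underline m=n_{11}+n_{01}-\hat M$. For each control unit $j$ let $w_j=Y_j$ if $M_j=1$ and $w_j=+\infty$ if $M_j=0$. For each $i$ with $Z_i=M_i=1$ let $A_i=\sum_{j:Z_j=0}\psi_{i,j}(+\infty,w_j)$, $B_i=\sum_{j:Z_j=0}\psi_{i,j}(Y_i-\delta_i,w_j)$ and $D_i=\phi(A_i)-\phi(B_i)$, and order these units as $l_1,\dots,l_{n_{11}}$ so that $D_{l_1}\le\dots\le D_{l_{n_{11}}}$. Let $L^\ast=\{l_1,\dots,l_{m^\ast}\}$ with $m^\ast=\max\{0,\min\{\underline m,n_{11}\}\}$. Define $\tilde{\boldsymbol Y}\in\overline{\mathbb R}^n$ by $\tilde Y_i=+\infty$ if $Z_i=M_i=1$ and $i\in L^\ast$; $\tilde Y_i=Y_i-\delta_i$ if $Z_i=M_i=1$ and $i\notin L^\ast$; $\tilde Y_i=+\infty$ if $Z_i=1,M_i=0$; $\tilde Y_i=Y_i$ if $Z_i=0,M_i=1$; $\tilde Y_i=+\infty$ if $Z_i=0,M_i=0$. Let $$p=G_{\mathrm R,\phi}\big(t_{\mathrm R,\phi}(\boldsymbol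 Z,\tilde{\boldsymbol Y})\big)+\beta,$$ where $t_{\mathrm R,\phi}$ is the Mann–Whitney-type statistic. Then, if $H_{\boldsymbol\delta}:\boldsymbol\tau=\boldsymbol\delta$ holds, $\mathbb P(p\le\alpha)\le\alpha$.
   Context: There are $n$ units. Unit $i$ has fixed potential outcomes $Y_i^\star(0),Y_i^\star(1)\in\mathbb R$ and fixed potential missingness indicators $M_i(0),M_i(1)\in\{0,1\}$; $\tau_i=Y_i^\star(1)-Y_i^\star(0)$, $\boldsymbol\tau=(\tau_1,\dots,\tau_n)^\intercal$. The assignment $\boldsymbol Z\in\{0,1\}^n$ is drawn from a completely randomized experiment (CRE): for fixed positive integers $n_1,n_0$, $n_1+n_0=n$, $\boldsymbol Z$ is uniform over vectors in $\{0,1\}^n$ with exactly $n_1$ ones, independently of all potential outcomes and missingness indicators; probabilities are over $\boldsymbol Z$. Observed missingness $M_i=Z_iM_i(1)+(1-Z_i)M_i(0)$; the realized outcome $Z_iY_i^\star(1)+(1-Z_i)Y_i^\star(0)$ is observed, and denoted $Y_i$, only when $M_i=1$. The statistic $\hat M$ is a function of the observed data. $\overline{\mathbb R}=\mathbb R\cup\{\pm\infty\}$; $\psi_{i,j}(y,y')=\mathbf 1\{y>y'\}+\mathbf 1\{y=y'\}\mathbf 1\{i\ge j\}$ for $y,y'\in\overline{\mathbb R}$. $\phi$ is a fixed nondecreasing real function on the nonnegative integers. The Mann–Whitney-type statistic is $t_{\mathrm R,\phi}(\boldsymbol z,\boldsymbol y)=\sum_{i=1}^n z_i\phi\big(\sum_{j=1}^n(1-z_j)\psi_{i,j}(y_i,y_j)\big)$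 for $\boldsymbol z\in\{0,1\}^n,\boldsymbol y\in\overline{\mathbb R}^n$. $G_{\mathrm R,\phi}(c)=\mathbb P(t_{\mathrm R,\phi}(\boldsymbol A,\boldsymbol y_0)\ge c)$ with $\boldsymbol A$ from the CRE and $\boldsymbol y_0\in\mathbb R^n$ any fixed vector (independent of $\boldsymbol y_0$). Ties among the $D_i$ may be broken arbitrarily. *)

theory Defs
  imports "HOL-Probability.Probability"
begin

text \<open>Units are indexed by 0,...,n-1 (the paper's 1..n shifted by one; order is preserved).
  Assignments are functions nat => bool that are False outside {0..<n}.\<close>

definition cre :: "nat \<Rightarrow> nat \<Rightarrow> (nat \<Rightarrow> bool) set" where
  "cre n n1 = {z. (\<forall>i. n \<le> i \<longrightarrow> \<not> z i) \<and> card {i. i < n \<and> z i} = n1}"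

definition cre_prob :: "nat \<Rightarrow> nat \<Rightarrow> ((nat \<Rightarrow> bool) \<Rightarrow> bool) \<Rightarrow> real" where
  "cre_prob n n1 E = measure_pmf.prob (pmf_of_set (cre n n1)) {z. E z}"

definition psi :: "nat \<Rightarrow> nat \<Rightarrow> ereal \<Rightarrow> ereal \<Rightarrow> nat" where
  "psi i j y y' = of_bool (y > y') + of_bool (y = y') * of_bool (i \<ge> j)"

definition t_R :: "nat \<Rightarrow> (nat \<Rightarrow> real) \<Rightarrow> (nat \<Rightarrow> bool) \<Rightarrow> (nat \<Rightarrow> ereal) \<Rightarrow> real" where
  "t_R n phi z y = (\<Sum>i<n. of_bool (z i) *
      phi (\<Sum>j<n. (1 - of_bool (z j)) * psi i j (y i) (y j)))"

text \<open>G is defined with the fixed reference vector y0 = 0 (the paper notes G does not depend on y0).\<close>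
definition G_R :: "nat \<Rightarrow> nat \<Rightarrow> (nat \<Rightarrow> real) \<Rightarrow> real \<Rightarrow> real" where
  "G_R n n1 phi c = cre_prob n n1 (\<lambda>a. t_R n phi a (\<lambda>_. ereal 0) \<ge> c)"

end

theory Submission
  imports Defs
begin

(* Let Ys be the vector with Ys_i = Y_i(0) where M_i(0) = 1 and Ys_i = +infinity otherwise. It does
   not depend on Z, and under H_delta it is the imputation Ytil would be if M(0) were known.
   Since psi orders the units strictly (ties broken by index), relabelling the units by their rank
   shows that t_R(A, y) has the same law under the CRE for every y; hence G(t_R(Z, Ys)) is a valid
   randomization p-value, P(G(t_R(Z, Ys)) <= u) <= u.
   Replacing the value Y_i - delta_i of a treated unit by +infinity raises its term by D_i >= 0.
   Ys does this for the set K of observed treated units with M_i(0) = 0, Ytil for the m* of them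
   with the smallest D_i. On the event sum_i M_i(0) <= Mhat, of probability >= 1 - beta, we have
   m* <= |K|, so t_R(Z, Ytil) <= t_R(Z, Ys), and p <= alpha forces G(t_R(Z, Ys)) <= alpha - beta.
   A union bound gives P(p <= alpha) <= (alpha - beta) + beta. *)

lemma sum_le_sum_if_dominated:
  fixes f :: "'a \<Rightarrow> real"
  assumes "finite X" "finite Y" "card X \<le> card Y"
    and le: "\<And>x y. x \<in> X \<Longrightarrow> y \<in> Y \<Longrightarrow> f x \<le> f y"
    and nonneg: "\<And>y. y \<in> Y \<Longrightarrow> 0 \<le> f y"
  shows "sum f X \<le> sum f Y"
proof -
  obtain g where g: "g ` X \<subseteq> Y" "inj_on g X"
    using card_le_inj assms(1-3) by blast
  have "sum f X \<le> sum (f \<circ> g) X"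
    using g(1) le by (intro sum_mono) auto
  also have "\<dots> = sum f (g ` X)"
    using g(2) by (simp add: sum.reindex)
  also have "\<dots> \<le> sum f Y"
    using g(1) assms(2) nonneg by (intro sum_mono2) auto
  finally show ?thesis .
qed

lemma sum_take_sorted_le:
  fixes f :: "'a \<Rightarrow> real"
  assumes sorted: "sorted (map f xs)" and K: "K \<subseteq> set xs" "m \<le> card K"
    and nonneg: "\<And>x. x \<in> set xs \<Longrightarrow> 0 \<le> f x"
  shows "sum f (set (take m xs)) \<le> sum f K"
proof -
  define P where "P = set (take m xs)"
  have fin: "finite K" "finite P"
    using K(1) finite_subset unfolding P_def by auto
  have "card P \<le> m"
    unfolding P_def by (metis card_length length_take min.bounded_iff)
  then have card_le: "card (P - K) \<le> card (K - P)"
    using K(2) fin by (simp add: card_Diff_subset_Int Int_commute)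
  have "f a \<le> f b" if "a \<in> P - K" "b \<in> K - P" for a b
  proof -
    have "b \<in> set (take m xs) \<union> set (drop m xs)"
      using that K(1) set_append[of "take m xs" "drop m xs"] by auto
    then have "b \<in> set (drop m xs)"
      using that unfolding P_def by blast
    moreover have "sorted (map f (take m xs) @ map f (drop m xs))"
      using sorted by (metis append_take_drop_id map_append)
    ultimately show ?thesis
      using that(1) unfolding P_def sorted_append by auto
  qed
  then have "sum f (P - K) \<le> sum f (K - P)"
    using fin card_le nonneg K(1) by (intro sum_le_sum_if_dominated) auto
  then show ?thesis
    using fin sum.Int_Diff[of P f K] sum.Int_Diff[of K f P] unfolding P_def
    by (simp add: Int_commute)
qed

lemma pmf_of_set_survival_le:
  fixes T :: "'a \<Rightarrow> real"
  assumes S: "finite S" "S \<noteq> {}" and "0 \<le> u"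
  defines "P \<equiv> measure_pmf.prob (pmf_of_set S)"
  shows "P {z. P {z'. T z \<le> T z'} \<le> u} \<le> u"
proof (cases "S \<inter> {z. P {z'. T z \<le> T z'} \<le> u} = {}")
  case True
  then show ?thesis
    using assms by (simp add: measure_pmf_of_set)
next
  case False
  define Q where "Q = S \<inter> {z. P {z'. T z \<le> T z'} \<le> u}"
  have "Min (T ` Q) \<in> T ` Q"
    using False S(1) unfolding Q_def by (intro Min_in) auto
  then obtain z0 where z0: "z0 \<in> Q" "T z0 = Min (T ` Q)"
    by auto
  have "P {z. P {z'. T z \<le> T z'} \<le> u} = P Q"
    unfolding P_def Q_def using S by (simp add: measure_pmf_of_set Int_assoc)
  also have "\<dots> \<le> P {z'. T z0 \<le> T z'}"
    unfolding P_def using z0(2) S(1) by (intro measure_pmf.finite_measure_mono) (auto simp: Q_def)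
  also have "\<dots> \<le> u"
    using z0(1) unfolding Q_def by blast
  finally show ?thesis .
qed

lemma linear_order_rank:
  fixes less :: "'a \<Rightarrow> 'a \<Rightarrow> bool"
  assumes "finite S"
    and trans: "\<And>x y z. less x y \<Longrightarrow> less y z \<Longrightarrow> less x z"
    and irrefl: "\<And>x. \<not> less x x"
    and total: "\<And>x y. x \<noteq> y \<Longrightarrow> less x y \<or> less y x"
  obtains r where "bij_betw r S {..<card S}"
    and "\<And>x y. x \<in> S \<Longrightarrow> y \<in> S \<Longrightarrow> r x < r y \<longleftrightarrow> less x y"
proof
  define r where "r x = card {y \<in> S. less y x}" for x
  have strict: "r x < r y" if "x \<in> S" "less x y" for x y
  proof -
    have "{z \<in> S. less z x} \<subset> {z \<in> S. less z y}"
      using that trans irrefl by blast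
    then show ?thesis
      unfolding r_def using assms(1) by (intro psubset_card_mono) auto
  qed
  show iff: "r x < r y \<longleftrightarrow> less x y" if "x \<in> S" "y \<in> S" for x y
    using strict that total irrefl by (metis less_asym less_irrefl)
  have "inj_on r S"
    by (rule inj_onI) (metis iff less_irrefl total)
  moreover have "r ` S \<subseteq> {..<card S}"
    unfolding r_def using assms(1) irrefl by (auto intro!: psubset_card_mono)
  ultimately show "bij_betw r S {..<card S}"
    using assms(1) by (simp add: bij_betw_def card_image card_subset_eq)
qed

lemma cre_finite: "finite (cre n n1)"
proof -
  have "cre n n1 \<subseteq> (\<lambda>S i. i \<in> S) ` Pow {..<n}"
  proof
    fix z assume "z \<in> cre n n1"
    then have "z = (\<lambda>i. i \<in> {i. i < n \<and> z i})"
      unfolding cre_def by (auto intro!: ext) (meson not_le)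
    then show "z \<in> (\<lambda>S i. i \<in> S) ` Pow {..<n}"
      by blast
  qed
  then show ?thesis
    by (rule finite_subset) auto
qed

lemma cre_nonempty: "n1 \<le> n \<Longrightarrow> cre n n1 \<noteq> {}"
proof -
  assume "n1 \<le> n"
  then have "{i. i < n \<and> i < n1} = {..<n1}"
    by auto
  with \<open>n1 \<le> n\<close> have "(\<lambda>i. i < n1) \<in> cre n n1"
    unfolding cre_def by auto
  then show ?thesis
    by blast
qed

lemma cre_prob_mono:
  assumes "n1 \<le> n" and "\<And>z. z \<in> cre n n1 \<Longrightarrow> E z \<Longrightarrow> F z"
  shows "cre_prob n n1 E \<le> cre_prob n n1 F"
proof -
  have "card (cre n n1 \<inter> {z. E z}) \<le> card (cre n n1 \<inter> {z. F z})"
    using assms(2) cre_finite by (intro card_mono) auto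
  then show ?thesis
    using cre_finite cre_nonempty[OF assms(1)]
    by (simp add: cre_prob_def measure_pmf_of_set divide_right_mono)
qed

lemma cre_prob_disj_le: "cre_prob n n1 (\<lambda>z. E z \<or> F z) \<le> cre_prob n n1 E + cre_prob n n1 F"
  unfolding cre_prob_def Collect_disj_eq
  by (rule measure_subadditive) (simp_all add: measure_pmf.emeasure_finite)

lemma cre_prob_not: "cre_prob n n1 (\<lambda>z. \<not> E z) = 1 - cre_prob n n1 E"
  unfolding cre_prob_def Collect_neg_eq Compl_eq_Diff_UNIV
  using measure_pmf.prob_compl[of "{z. E z}"] by simp

lemma cre_permute:
  assumes r: "bij_betw r {..<n} {..<n}"
  shows "bij_betw (\<lambda>z i. i < n \<and> z (r i)) (cre n n1) (cre n n1)"
proof -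
  let ?\<pi> = "\<lambda>z i. i < n \<and> z (r i)"
  have img: "r ` {..<n} = {..<n}"
    using r by (simp add: bij_betw_def)
  then have r_lt: "r i < n" if "i < n" for i
    using that by blast
  have "?\<pi> z \<in> cre n n1" if "z \<in> cre n n1" for z
  proof -
    have "r ` {i. i < n \<and> z (r i)} = {k. k < n \<and> z k}"
    proof
      show "r ` {i. i < n \<and> z (r i)} \<subseteq> {k. k < n \<and> z k}"
        using r_lt by auto
      show "{k. k < n \<and> z k} \<subseteq> r ` {i. i < n \<and> z (r i)}"
      proof
        fix k assume k: "k \<in> {k. k < n \<and> z k}"
        then have "k \<in> r ` {..<n}"
          using img by simp
        then obtain i where "i < n" "k = r i"
          by auto
        with k show "k \<in> r ` {i. i < n \<and> z (r i)}"
          by auto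
      qed
    qed
    moreover have "inj_on r {i. i < n \<and> z (r i)}"
      using r by (auto simp: bij_betw_def inj_on_def)
    ultimately show ?thesis
      using that unfolding cre_def by (simp add: card_image[symmetric])
  qed
  moreover have "inj_on ?\<pi> (cre n n1)"
  proof (rule inj_onI, rule ext)
    fix z1 z2 k
    assume z: "z1 \<in> cre n n1" "z2 \<in> cre n n1" "?\<pi> z1 = ?\<pi> z2"
    show "z1 k = z2 k"
    proof (cases "k < n")
      case True
      then have "k \<in> r ` {..<n}"
        using img by simp
      then obtain i where "i < n" "k = r i"
        by auto
      then show ?thesis
        using fun_cong[OF z(3), of i] by simp
    next
      case False
      then show ?thesis
        using z(1,2) unfolding cre_def by auto
    qed
  qed
  ultimately show ?thesis
    using cre_finite by (simp add: bij_betw_def endo_inj_surj image_subsetI)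
qed

lemma cre_prob_permute:
  assumes "n1 \<le> n" and r: "bij_betw r {..<n} {..<n}"
  shows "cre_prob n n1 (\<lambda>z. E (\<lambda>i. i < n \<and> z (r i))) = cre_prob n n1 E"
proof -
  let ?\<pi> = "\<lambda>z i. i < n \<and> z (r i)"
  have "bij_betw ?\<pi> {z \<in> cre n n1. E (?\<pi> z)} {z \<in> cre n n1. E z}"
    using cre_permute[OF r, of n1] by (auto simp: bij_betw_def inj_on_def)
  then have "card {z \<in> cre n n1. E (?\<pi> z)} = card {z \<in> cre n n1. E z}"
    by (rule bij_betw_same_card)
  then show ?thesis
    using assms(1) cre_finite cre_nonempty by (simp add: cre_prob_def measure_pmf_of_set Int_def)
qed

lemma psi_eq_of_bool: "i \<noteq> j \<Longrightarrow> psi i j a b = of_bool (b < a \<or> (b = a \<and> j < i))"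
  unfolding psi_def by auto

lemma psi_le_psi_infty: "psi i j a b \<le> psi i j \<infinity> b"
  by (cases b) (auto simp: psi_def)

lemma psi_rank:
  fixes y :: "nat \<Rightarrow> ereal"
  obtains r where "bij_betw r {..<n} {..<n}"
    and "\<And>i j. i < n \<Longrightarrow> j < n \<Longrightarrow> i \<noteq> j \<Longrightarrow> psi i j (y i) (y j) = psi (r i) (r j) 0 0"
proof -
  define prec where "prec j i \<longleftrightarrow> y j < y i \<or> (y j = y i \<and> j < i)" for j i
  have trans: "prec a b \<Longrightarrow> prec b c \<Longrightarrow> prec a c"
    and irrefl: "\<not> prec a a"
    and total: "a \<noteq> b \<Longrightarrow> prec a b \<or> prec b a" for a b c
    unfolding prec_def by auto
  obtain r where r: "bij_betw r {..<n} {..<card {..<n}}"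
    and less: "\<And>i j. i \<in> {..<n} \<Longrightarrow> j \<in> {..<n} \<Longrightarrow> r i < r j \<longleftrightarrow> prec i j"
    by (rule linear_order_rank[of "{..<n}" prec]) (use trans irrefl total in blast)+
  have "psi i j (y i) (y j) = psi (r i) (r j) 0 0" if "i < n" "j < n" "i \<noteq> j" for i j
  proof -
    have "r i \<noteq> r j"
      using r that by (auto simp: bij_betw_def inj_on_def)
    then show ?thesis
      using that less[of j i] by (simp add: psi_eq_of_bool prec_def)
  qed
  with r that show ?thesis
    by simp
qed

lemma t_R_permute:
  assumes r: "bij_betw r {..<n} {..<n}"
    and psi_eq: "\<And>i j. i < n \<Longrightarrow> j < n \<Longrightarrow> i \<noteq> j \<Longrightarrow>
      psi i j (y i) (y j) = psi (r i) (r j) (y' (r i)) (y' (r j))"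
  shows "t_R n phi (\<lambda>i. i < n \<and> z (r i)) y = t_R n phi z y'"
proof -
  define g where "g k = of_bool (z k) * phi (\<Sum>l<n. (1 - of_bool (z l)) * psi k l (y' k) (y' l))" for k
  have "of_bool (z (r i)) * phi (\<Sum>j<n. (1 - of_bool (j < n \<and> z (r j))) * psi i j (y i) (y j)) = g (r i)"
    if i: "i < n" for i
  proof (cases "z (r i)")
    case True
    have "(\<Sum>j<n. (1 - of_bool (j < n \<and> z (r j))) * psi i j (y i) (y j))
        = (\<Sum>j<n. (1 - of_bool (z (r j))) * psi (r i) (r j) (y' (r i)) (y' (r j)))"
      using True psi_eq i by (intro sum.cong) auto
    also have "\<dots> = (\<Sum>l<n. (1 - of_bool (z l)) * psi (r i) l (y' (r i)) (y' l))"
      by (rule sum.reindex_bij_betw[OF r])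
    finally show ?thesis
      using True by (simp add: g_def)
  qed (simp add: g_def)
  then have "t_R n phi (\<lambda>i. i < n \<and> z (r i)) y = (\<Sum>i<n. g (r i))"
    unfolding t_R_def by (intro sum.cong) auto
  also have "\<dots> = t_R n phi z y'"
    unfolding t_R_def g_def by (rule sum.reindex_bij_betw[OF r])
  finally show ?thesis .
qed

lemma G_R_eq_cre_prob:
  assumes "n1 \<le> n"
  shows "G_R n n1 phi c = cre_prob n n1 (\<lambda>z. c \<le> t_R n phi z y)"
proof -
  obtain r where r: "bij_betw r {..<n} {..<n}"
    and psi_eq: "\<And>i j. i < n \<Longrightarrow> j < n \<Longrightarrow> i \<noteq> j \<Longrightarrow> psi i j (y i) (y j) = psi (r i) (r j) 0 0"
    using psi_rank by blast
  have "cre_prob n n1 (\<lambda>z. c \<le> t_R n phi z y)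
      = cre_prob n n1 (\<lambda>z. c \<le> t_R n phi (\<lambda>i. i < n \<and> z (r i)) y)"
    using cre_prob_permute[OF assms r, of "\<lambda>z. c \<le> t_R n phi z y"] by simp
  also have "\<dots> = G_R n n1 phi c"
  proof -
    have "t_R n phi (\<lambda>i. i < n \<and> z (r i)) y = t_R n phi z (\<lambda>_. ereal 0)" for z
      using psi_eq by (intro t_R_permute[OF r]) (simp add: zero_ereal_def)
    then show ?thesis
      unfolding G_R_def by simp
  qed
  finally show ?thesis ..
qed

lemma G_R_antimono:
  assumes "n1 \<le> n" "c \<le> c'"
  shows "G_R n n1 phi c' \<le> G_R n n1 phi c"
  unfolding G_R_def using assms by (intro cre_prob_mono) auto

lemma cre_prob_G_R_le:
  assumes "n1 \<le> n" "0 \<le> u"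
  shows "cre_prob n n1 (\<lambda>z. G_R n n1 phi (t_R n phi z y) \<le> u) \<le> u"
  using pmf_of_set_survival_le[OF cre_finite cre_nonempty[OF assms(1)] assms(2),
      of "\<lambda>z. t_R n phi z y"]
  unfolding G_R_eq_cre_prob[OF assms(1), of _ _ y] by (simp add: cre_prob_def)

lemma cre_prob_G_R_dominated_le:
  fixes y :: "nat \<Rightarrow> ereal" and Y :: "(nat \<Rightarrow> bool) \<Rightarrow> nat \<Rightarrow> ereal"
  assumes n1: "n1 \<le> n" and "beta \<le> alpha"
    and E: "1 - beta \<le> cre_prob n n1 E"
    and dominated: "\<And>z. z \<in> cre n n1 \<Longrightarrow> E z \<Longrightarrow> t_R n phi z (Y z) \<le> t_R n phi z y"
  shows "cre_prob n n1 (\<lambda>z. G_R n n1 phi (t_R n phi z (Y z)) + beta \<le> alpha) \<le> alpha"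
proof -
  have "cre_prob n n1 (\<lambda>z. G_R n n1 phi (t_R n phi z (Y z)) + beta \<le> alpha)
      \<le> cre_prob n n1 (\<lambda>z. G_R n n1 phi (t_R n phi z y) \<le> alpha - beta \<or> \<not> E z)"
  proof (rule cre_prob_mono[OF n1])
    fix z assume z: "z \<in> cre n n1" "G_R n n1 phi (t_R n phi z (Y z)) + beta \<le> alpha"
    show "G_R n n1 phi (t_R n phi z y) \<le> alpha - beta \<or> \<not> E z"
    proof (cases "E z")
      case True
      then have "G_R n n1 phi (t_R n phi z y) \<le> G_R n n1 phi (t_R n phi z (Y z))"
        using dominated[OF z(1)] by (intro G_R_antimono[OF n1])
      then show ?thesis
        using z(2) by simp
    qed simp
  qed
  also have "\<dots> \<le> cre_prob n n1 (\<lambda>z. G_R n n1 phi (t_R n phi z y) \<le> alpha - beta)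
      + cre_prob n n1 (\<lambda>z. \<not> E z)"
    by (rule cre_prob_disj_le)
  also have "\<dots> \<le> (alpha - beta) + beta"
  proof (rule add_mono)
    show "cre_prob n n1 (\<lambda>z. G_R n n1 phi (t_R n phi z y) \<le> alpha - beta) \<le> alpha - beta"
      using \<open>beta \<le> alpha\<close> by (intro cre_prob_G_R_le[OF n1]) simp
    show "cre_prob n n1 (\<lambda>z. \<not> E z) \<le> beta"
      using E unfolding cre_prob_not by simp
  qed
  finally show ?thesis
    by simp
qed

(* The paper's A_i and B_i are control_count n z w i u at u = +infinity and at u = Y_i - delta_i. *)
definition control_count :: "nat \<Rightarrow> (nat \<Rightarrow> bool) \<Rightarrow> (nat \<Rightarrow> ereal) \<Rightarrow> nat \<Rightarrow> ereal \<Rightarrow> nat" where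
  "control_count n z v i u = (\<Sum>j\<in>{j. j < n \<and> \<not> z j}. psi i j u (v j))"

lemma control_count_le_infty: "control_count n z v i u \<le> control_count n z v i \<infinity>"
  unfolding control_count_def by (intro sum_mono psi_le_psi_infty)

lemma t_R_impute_treated:
  fixes v y :: "nat \<Rightarrow> ereal" and a :: "nat \<Rightarrow> real"
  assumes X: "X \<subseteq> {i. i < n \<and> z i}"
    and control: "\<And>j. j < n \<Longrightarrow> \<not> z j \<Longrightarrow> y j = v j"
    and treated: "\<And>i. i < n \<Longrightarrow> z i \<Longrightarrow> y i = (if i \<in> X then ereal (a i) else \<infinity>)"
  shows "t_R n phi z y = (\<Sum>i\<in>{i. i < n \<and> z i}. phi (control_count n z v i \<infinity>))
    - (\<Sum>i\<in>X. phi (control_count n z v i \<infinity>) - phi (control_count n z v i (ereal (a i))))"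
proof -
  let ?T = "{i. i < n \<and> z i}"
  let ?c = "control_count n z v"
  have inner: "(\<Sum>j<n. (1 - of_bool (z j)) * psi i j u (y j)) = ?c i u" for i u
    unfolding control_count_def using control
    by (intro sum.mono_neutral_cong_right) auto
  have "t_R n phi z y = (\<Sum>i\<in>?T. phi (?c i (y i)))"
    unfolding t_R_def inner by (intro sum.mono_neutral_cong_right) auto
  also have "\<dots> = (\<Sum>i\<in>?T - X. phi (?c i \<infinity>)) + (\<Sum>i\<in>X. phi (?c i (ereal (a i))))"
    using X treated by (simp add: sum.subset_diff[OF X])
  also have "\<dots> = (\<Sum>i\<in>?T. phi (?c i \<infinity>)) - (\<Sum>i\<in>X. phi (?c i \<infinity>) - phi (?c i (ereal (a i))))"
    by (simp add: sum.subset_diff[OF X] sum_subtractf)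
  finally show ?thesis .
qed

lemma t_R_impute_prefix_le:
  fixes n :: nat and z :: "nat \<Rightarrow> bool" and phi :: "nat \<Rightarrow> real"
    and v y y' :: "nat \<Rightarrow> ereal" and a :: "nat \<Rightarrow> real"
  defines "D i \<equiv> phi (control_count n z v i \<infinity>) - phi (control_count n z v i (ereal (a i)))"
  assumes "mono phi"
    and xs: "set xs \<subseteq> {i. i < n \<and> z i}" "sorted (map D xs)"
    and K: "K \<subseteq> set xs" "m \<le> card K"
    and control: "\<And>j. j < n \<Longrightarrow> \<not> z j \<Longrightarrow> y j = v j" "\<And>j. j < n \<Longrightarrow> \<not> z j \<Longrightarrow> y' j = v j"
    and treated: "\<And>i. i < n \<Longrightarrow> z i \<Longrightarrow>
        y i = (if i \<in> set xs - set (take m xs) then ereal (a i) else \<infinity>)"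
      "\<And>i. i < n \<Longrightarrow> z i \<Longrightarrow> y' i = (if i \<in> set xs - K then ereal (a i) else \<infinity>)"
  shows "t_R n phi z y \<le> t_R n phi z y'"
proof -
  have "0 \<le> D i" for i
    unfolding D_def using \<open>mono phi\<close> control_count_le_infty by (simp add: monoD)
  then have "sum D (set (take m xs)) \<le> sum D K"
    using xs(2) K by (intro sum_take_sorted_le) auto
  moreover have "set (take m xs) \<subseteq> set xs"
    by (rule set_take_subset)
  ultimately have "sum D (set xs - K) \<le> sum D (set xs - set (take m xs))"
    using K(1) by (simp add: sum_diff)
  moreover have "set xs - set (take m xs) \<subseteq> {i. i < n \<and> z i}" "set xs - K \<subseteq> {i. i < n \<and> z i}"
    using xs(1) by auto
  ultimately show ?thesis
    unfolding D_def using control treated by (simp add: t_R_impute_treated)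
qed

lemma card_M0_add_card_treated_M1_only:
  fixes n :: nat
  assumes "\<And>i. i < n \<Longrightarrow> M0 i \<longrightarrow> M1 i"
  shows "card {i. i < n \<and> M0 i} + card {i. i < n \<and> z i \<and> M1 i \<and> \<not> M0 i}
    = card {i. i < n \<and> z i \<and> M1 i} + card {i. i < n \<and> \<not> z i \<and> M0 i}"
proof -
  let ?A = "{i. i < n \<and> z i \<and> M0 i}"
  have card_Un: "card (X \<union> Y) = card X + card Y" if "X \<subseteq> {..<n}" "Y \<subseteq> {..<n}" "X \<inter> Y = {}"
    for X Y :: "nat set"
    using that by (intro card_Un_disjoint) (auto intro: finite_subset)
  have "{i. i < n \<and> M0 i} = ?A \<union> {i. i < n \<and> \<not> z i \<and> M0 i}"
    by auto
  moreover have "{i. i < n \<and> z i \<and> M1 i} = ?A \<union> {i. i < n \<and> z i \<and> M1 i \<and> \<not> M0 i}"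
    using assms by auto
  ultimately show ?thesis
    by (simp add: card_Un subset_iff disjoint_iff)
qed

theorem theorem4:
  fixes n n1 n0 :: nat
    and Y1 Y0 :: "nat \<Rightarrow> real"
    and M1 M0 :: "nat \<Rightarrow> bool"
    and phi :: "nat \<Rightarrow> real"
    and delta :: "nat \<Rightarrow> real"
    and alpha beta :: real
    and Mhat :: "(nat \<Rightarrow> bool) \<Rightarrow> (nat \<Rightarrow> real option) \<Rightarrow> int"
    and ordl :: "(nat \<Rightarrow> bool) \<Rightarrow> nat list"
    and Mo :: "(nat \<Rightarrow> bool) \<Rightarrow> nat \<Rightarrow> bool"
    and Yo :: "(nat \<Rightarrow> bool) \<Rightarrow> nat \<Rightarrow> real"
    and obs :: "(nat \<Rightarrow> bool) \<Rightarrow> nat \<Rightarrow> real option"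
    and n11 n01 :: "(nat \<Rightarrow> bool) \<Rightarrow> nat"
    and w :: "(nat \<Rightarrow> bool) \<Rightarrow> nat \<Rightarrow> ereal"
    and A B :: "(nat \<Rightarrow> bool) \<Rightarrow> nat \<Rightarrow> nat"
    and D :: "(nat \<Rightarrow> bool) \<Rightarrow> nat \<Rightarrow> real"
    and mstar :: "(nat \<Rightarrow> bool) \<Rightarrow> nat"
    and Lstar :: "(nat \<Rightarrow> bool) \<Rightarrow> nat set"
    and Ytil :: "(nat \<Rightarrow> bool) \<Rightarrow> nat \<Rightarrow> ereal"
    and p :: "(nat \<Rightarrow> bool) \<Rightarrow> real"
  assumes n1_pos: "0 < n1" and n0_pos: "0 < n0" and n_eq: "n = n1 + n0"
    and mono_M: "\<And>i. i < n \<Longrightarrow> M0 i \<longrightarrow> M1 i"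
    and phi_mono: "mono phi"
    and alpha: "0 < alpha" "alpha < 1"
    and beta: "0 < beta" "beta < alpha"
    and Mo_def: "Mo \<equiv> (\<lambda>z i. if z i then M1 i else M0 i)"
    and Yo_def: "Yo \<equiv> (\<lambda>z i. if z i then Y1 i else Y0 i)"
    and obs_def: "obs \<equiv> (\<lambda>z i. if i < n \<and> Mo z i then Some (Yo z i) else None)"
    and Mhat_cov: "cre_prob n n1 (\<lambda>z. int (card {i. i < n \<and> M0 i}) \<le> Mhat z (obs z)) \<ge> 1 - beta"
    and n11_def: "n11 \<equiv> (\<lambda>z. card {i. i < n \<and> z i \<and> Mo z i})"
    and n01_def: "n01 \<equiv> (\<lambda>z. card {i. i < n \<and> \<not> z i \<and> Mo z i})"
    and w_def: "w \<equiv> (\<lambda>z j. if Mo z j then ereal (Yo z j) else \<infinity>)"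
    and A_def: "A \<equiv> (\<lambda>z i. \<Sum>j\<in>{j. j < n \<and> \<not> z j}. psi i j \<infinity> (w z j))"
    and B_def: "B \<equiv> (\<lambda>z i. \<Sum>j\<in>{j. j < n \<and> \<not> z j}. psi i j (ereal (Yo z i - delta i)) (w z j))"
    and D_def: "D \<equiv> (\<lambda>z i. phi (A z i) - phi (B z i))"
    and ordl: "\<And>z. z \<in> cre n n1 \<Longrightarrow> distinct (ordl z) \<and>
                 set (ordl z) = {i. i < n \<and> z i \<and> Mo z i} \<and> sorted (map (D z) (ordl z))"
    and mstar_def: "mstar \<equiv> (\<lambda>z. nat (max 0 (min (int (n11 z) + int (n01 z) - Mhat z (obs z)) (int (n11 z)))))"
    and Lstar_def: "Lstar \<equiv> (\<lambda>z. set (take (mstar z) (ordl z)))"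
    and Ytil_def: "Ytil \<equiv> (\<lambda>z i.
           if z i \<and> Mo z i then (if i \<in> Lstar z then \<infinity> else ereal (Yo z i - delta i))
           else if z i \<and> \<not> Mo z i then \<infinity>
           else if \<not> z i \<and> Mo z i then ereal (Yo z i)
           else \<infinity>)"
    and p_def: "p \<equiv> (\<lambda>z. G_R n n1 phi (t_R n phi z (Ytil z)) + beta)"
    and H_delta: "\<And>i. i < n \<Longrightarrow> Y1 i - Y0 i = delta i"
  shows "cre_prob n n1 (\<lambda>z. p z \<le> alpha) \<le> alpha"
proof -
  have n1_le: "n1 \<le> n"
    using n_eq by simp
  define Ys where "Ys i = (if M0 i then ereal (Y0 i) else \<infinity>)" for i
  have imputed_le: "t_R n phi z (Ytil z) \<le> t_R n phi z Ys"
    if z: "z \<in> cre n n1" "int (card {i. i < n \<and> M0 i}) \<le> Mhat z (obs z)" for z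
  proof -
    define K where "K = {i. i < n \<and> z i \<and> M1 i \<and> \<not> M0 i}"
    have set_ordl: "set (ordl z) = {i. i < n \<and> z i \<and> M1 i}"
      using ordl[OF z(1)] by (auto simp: Mo_def)
    have sorted_ordl: "sorted (map (\<lambda>i. phi (control_count n z (w z) i \<infinity>)
        - phi (control_count n z (w z) i (ereal (Yo z i - delta i)))) (ordl z))"
      using ordl[OF z(1)] by (simp add: D_def A_def B_def control_count_def)
    have "n11 z = card {i. i < n \<and> z i \<and> M1 i}" "n01 z = card {i. i < n \<and> \<not> z i \<and> M0 i}"
      unfolding n11_def n01_def Mo_def by (auto intro!: arg_cong[where f = card])
    then have "int (n11 z) + int (n01 z) - Mhat z (obs z) \<le> int (card K)"
      using card_M0_add_card_treated_M1_only[of n M0 M1 z, OF mono_M] z(2) unfolding K_def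
      by linarith
    then have mstar_le: "mstar z \<le> card K"
      unfolding mstar_def by (simp add: nat_le_iff)
    have ordl_treated: "set (ordl z) \<subseteq> {i. i < n \<and> z i}" and K_sub: "K \<subseteq> set (ordl z)"
      unfolding set_ordl K_def by auto
    have Ytil_control: "Ytil z j = w z j" and Ys_control: "Ys j = w z j" if "j < n" "\<not> z j" for j
      using that by (simp_all add: Ytil_def Ys_def w_def Mo_def Yo_def)
    have Ytil_treated: "Ytil z i = (if i \<in> set (ordl z) - set (take (mstar z) (ordl z))
        then ereal (Yo z i - delta i) else \<infinity>)" if "i < n" "z i" for i
      using that set_ordl by (auto simp: Ytil_def Lstar_def Mo_def)
    have Ys_treated: "Ys i = (if i \<in> set (ordl z) - K then ereal (Yo z i - delta i) else \<infinity>)"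
      if "i < n" "z i" for i
      using that set_ordl mono_M[OF that(1)] H_delta[OF that(1)] by (auto simp: Ys_def Yo_def K_def)
    show ?thesis
      using t_R_impute_prefix_le[where v = "w z" and a = "\<lambda>i. Yo z i - delta i",
          OF phi_mono ordl_treated sorted_ordl K_sub mstar_le
          Ytil_control Ys_control Ytil_treated Ys_treated] .
  qed
  from beta have "beta \<le> alpha"
    by simp
  then show ?thesis
    unfolding p_def by (rule cre_prob_G_R_dominated_le[OF n1_le _ Mhat_cov imputed_le])
qed

end
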